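(* Let $\Gamma\le E(n)$ be discrete, and let $(G,V)$ be a finite index cocompact translation pair of $\Gamma$ such that $G$ is abelian and $V$ is a linear subspace. Let $k=\dim\Gamma$ and suppose $k<n-2$. Then there exist half-lines $L_1,L_2\subset V^\perp$ starting from $0$ such that the following holds: if $\sigma'$ is a path from $L_1$ to $GL_2=\bigcup_{\gamma\in G}\gamma(L_2)$ and $s=\inf_t d(V,\sigma'(t))>0$, then $\operatorname{len}(\sigma')\ge\sqrt2\,s$.
   Context: $E(n)$ is the isometry group of $\mathbb{R}^n$ (maps $x\mapsto Bx+b$, $B\in O(n)$) with the topology of $O(n)\times\mathbb{R}^n$. For a discrete $\Gamma\le E(n)$, a subgroup $G\le\Gamma$ and an affine subspace $V$, $(G,V)$ is a cocompact translation pair of $\Gamma$ if $gV=V$ and $g|_V$ is a translation of $V$ for all $g\in G$, and $V/G$ is compact; it is a finite index cocompact translation pair if moreover $[\Gamma:G]<\infty$. $\dim\Gamma:=\dim V$ for any such pair (independent of choice). $V^\perp$ is the linear orthogonal complement of $V$, and $\operatorname{len}$ denotes Euclidean length of a path. *)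

theory Defs
  imports "HOL-Analysis.Analysis"
begin

text \<open>Elements of E(n): pairs (B,b) with B orthogonal, acting by x \<mapsto> B x + b.
  The topology is that of O(n) \<times> R^n, i.e. the product metric on pairs.\<close>

type_synonym 'n isom = "(real^'n^'n) \<times> (real^'n)"

definition isom_apply :: "'n::finite isom \<Rightarrow> real^'n \<Rightarrow> real^'n" where
  "isom_apply g x = fst g *v x + snd g"

definition isom_mult :: "'n::finite isom \<Rightarrow> 'n isom \<Rightarrow> 'n isom" where
  "isom_mult g h = (fst g ** fst h, fst g *v snd h + snd g)"

definition isom_one :: "'n::finite isom" where
  "isom_one = (mat 1, 0)"

definition isom_inv :: "'n::finite isom \<Rightarrow> 'n isom" where
  "isom_inv g = (transpose (fst g), - (transpose (fst g) *v snd g))"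

definition Euclid_group :: "'n::finite isom set" where
  "Euclid_group = {g. orthogonal_matrix (fst g)}"

definition isom_subgroup :: "'n::finite isom set \<Rightarrow> 'n isom set \<Rightarrow> bool" where
  "isom_subgroup H K \<longleftrightarrow> H \<subseteq> K \<and> isom_one \<in> H \<and>
     (\<forall>g\<in>H. \<forall>h\<in>H. isom_mult g h \<in> H) \<and> (\<forall>g\<in>H. isom_inv g \<in> H)"

definition discrete_isom_group :: "'n::finite isom set \<Rightarrow> bool" where
  "discrete_isom_group \<Gamma> \<longleftrightarrow> isom_subgroup \<Gamma> Euclid_group \<and>
     (\<forall>g\<in>\<Gamma>. \<exists>e>0. \<forall>h\<in>\<Gamma>. dist h g < e \<longrightarrow> h = g)"

definition cocompact_translation_pair ::
  "'n::finite isom set \<Rightarrow> 'n isom set \<Rightarrow> (real^'n) set \<Rightarrow> bool" where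
  "cocompact_translation_pair \<Gamma> G V \<longleftrightarrow>
     isom_subgroup G \<Gamma> \<and> affine V \<and> V \<noteq> {} \<and>
     (\<forall>g\<in>G. isom_apply g ` V = V \<and> (\<exists>v. \<forall>x\<in>V. isom_apply g x = x + v)) \<and>
     (\<exists>(T :: (real^'n) set topology) q.
        quotient_map (top_of_set V) T q \<and>
        (\<forall>x\<in>V. \<forall>y\<in>V. q x = q y \<longleftrightarrow> (\<exists>g\<in>G. isom_apply g x = y)) \<and>
        compact_space T)"

definition finite_index :: "'n::finite isom set \<Rightarrow> 'n isom set \<Rightarrow> bool" where
  "finite_index \<Gamma> G \<longleftrightarrow> finite {isom_mult g ` G | g. g \<in> \<Gamma>}"

definition half_line :: "real^'n \<Rightarrow> (real^'n) set" where
  "half_line u = {t *\<^sub>R u | t. t \<ge> 0}"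

definition path_len :: "(real \<Rightarrow> real^'n) \<Rightarrow> ereal" where
  "path_len \<sigma> = (SUP ts \<in> {ts. sorted ts \<and> set ts \<subseteq> {0..1}}.
      ereal (\<Sum>i<length ts - 1. dist (\<sigma> (ts ! i)) (\<sigma> (ts ! Suc i))))"

end

theory Submission
  imports Defs
begin

text \<open>
  The linear parts of \<open>G\<close> are commuting orthogonal maps fixing \<open>V\<close>; they preserve
  \<open>U = V\<^sup>\<bottom>\<close>, where \<open>dim U \<ge> 3\<close>, and the family is closed under adjoints. Such a family has a
  nonzero \<open>u\<^sub>2 \<in> U\<close> whose orbit lies in a proper subspace of \<open>U\<close>: if some self-adjoint map
  commuting with the family is not scalar on \<open>U\<close>, take an eigenvector, whose eigenspace is
  invariant; otherwise the symmetric parts \<open>f + f\<^sup>*\<close> and the products of skew parts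
  \<open>(f - f\<^sup>*)(g - g\<^sup>*)\<close> are all scalar on \<open>U\<close>, which confines every orbit to a plane.
  Choose \<open>u\<^sub>1 \<in> U\<close> orthogonal to that orbit. The endpoints of a path from \<open>\<real>\<^sub>\<ge>\<^sub>0 u\<^sub>1\<close> to
  \<open>g(\<real>\<^sub>\<ge>\<^sub>0 u\<^sub>2)\<close> are then of the form \<open>p\<close> and \<open>w + b\<close> with \<open>p, w, b\<close> pairwise orthogonal,
  \<open>b \<in> V\<close> and \<open>|p|, |w| \<ge> s\<close>, so the path is at least \<open>|p - w - b| \<ge> \<surd>2 s\<close> long.
\<close>

lemma nonpos_if_perturbation_nonpos:
  fixes a b :: real
  assumes "\<And>t. t > 0 \<Longrightarrow> 2*t*a + t^2*b \<le> 0"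
  shows "a \<le> 0"
proof (rule ccontr)
  assume "\<not> a \<le> 0"
  define t where "t = a / (\<bar>b\<bar> + 1)"
  have "t > 0" "t * \<bar>b\<bar> < a"
    using \<open>\<not> a \<le> 0\<close> by (auto simp: t_def field_simps)
  moreover have "- (t*b) \<le> t * \<bar>b\<bar>"
    using abs_ge_minus_self[of "t*b"] \<open>t > 0\<close> by (simp add: abs_mult)
  ultimately have "t * (2*a + t*b) > 0"
    using \<open>\<not> a \<le> 0\<close> by (intro mult_pos_pos) auto
  with assms[OF \<open>t > 0\<close>] show False
    by (simp add: algebra_simps power2_eq_square)
qed

lemma self_adjoint_eigenvector_in_invariant_subspace:
  fixes f :: "'a::euclidean_space \<Rightarrow> 'a"
  assumes "linear f" and sym: "\<And>x y. f x \<bullet> y = x \<bullet> f y"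
    and "subspace U" and "U \<noteq> {0}" and "f ` U \<subseteq> U"
  obtains v \<mu> where "v \<in> U" "v \<noteq> 0" "f v = \<mu> *\<^sub>R v"
proof -
  interpret f: linear f by fact
  define S where "S = U \<inter> sphere 0 1"
  obtain x where "x \<in> U" "x \<noteq> 0"
    using \<open>U \<noteq> {0}\<close> \<open>subspace U\<close> subspace_0 by blast
  then have "x /\<^sub>R norm x \<in> S"
    using \<open>subspace U\<close> by (simp add: S_def subspace_scale)
  moreover have "compact S"
    unfolding S_def using \<open>subspace U\<close> by (simp add: closed_Int_compact closed_subspace)
  moreover have "continuous_on S (\<lambda>x. x \<bullet> f x)"
    using \<open>linear f\<close> by (intro continuous_intros linear_continuous_on linear_conv_bounded_linear[THEN iffD1])
  ultimately obtain v where "v \<in> S" and v_max: "\<And>y. y \<in> S \<Longrightarrow> y \<bullet> f y \<le> v \<bullet> f v"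
    using continuous_attains_sup[of S "\<lambda>x. x \<bullet> f x"] by blast
  define l where "l = v \<bullet> f v"
  have "v \<in> U" "v \<bullet> v = 1"
    using \<open>v \<in> S\<close> by (auto simp: S_def norm_eq_1)
  have rayleigh: "y \<bullet> f y \<le> l * (y \<bullet> y)" if "y \<in> U" for y
  proof (cases "y = 0")
    case False
    then have "y /\<^sub>R norm y \<in> S"
      using that \<open>subspace U\<close> by (simp add: S_def subspace_scale)
    then have "(y /\<^sub>R norm y) \<bullet> f (y /\<^sub>R norm y) \<le> l"
      using v_max unfolding l_def by blast
    then have "(y \<bullet> f y) / (norm y)^2 \<le> l"
      by (simp add: f.scale power2_eq_square divide_inverse ac_simps)
    then show ?thesis
      using False by (simp add: field_simps power2_norm_eq_inner)
  qed (simp add: f.zero)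
  define w where "w = f v - l *\<^sub>R v"
  have "w \<in> U"
    unfolding w_def using assms(5) \<open>v \<in> U\<close> \<open>subspace U\<close> by (auto intro: subspace_diff subspace_scale)
  \<comment> \<open>First-order condition at the maximum \<open>v\<close>, perturbed in the direction \<open>w\<close>.\<close>
  have "w \<bullet> w \<le> 0"
  proof (rule nonpos_if_perturbation_nonpos)
    fix t :: real
    have "v + t *\<^sub>R w \<in> U"
      using \<open>v \<in> U\<close> \<open>w \<in> U\<close> \<open>subspace U\<close> by (simp add: subspace_add subspace_scale)
    from rayleigh[OF this] show "2*t*(w \<bullet> w) + t^2*(w \<bullet> f w - l*(w \<bullet> w)) \<le> 0"
      using sym[of v w] \<open>v \<bullet> v = 1\<close>
      by (simp add: w_def l_def f.add f.scale f.diff inner_add_left inner_add_right inner_diff_left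
          inner_diff_right inner_commute power2_eq_square algebra_simps)
  qed
  then have "f v = l *\<^sub>R v"
    unfolding w_def by (meson eq_iff_diff_eq_0 inner_eq_zero_iff inner_ge_zero order_antisym)
  moreover have "v \<noteq> 0"
    using \<open>v \<bullet> v = 1\<close> by auto
  ultimately show ?thesis
    using that \<open>v \<in> U\<close> by blast
qed

definition skew_part :: "('a::euclidean_space \<Rightarrow> 'a) \<Rightarrow> 'a \<Rightarrow> 'a" where
  "skew_part f y = f y - adjoint f y"

lemma linear_skew_part: "linear f \<Longrightarrow> linear (skew_part f)"
  unfolding skew_part_def by (intro linear_compose_sub adjoint_linear)

lemma inner_skew_part:
  "linear f \<Longrightarrow> x \<bullet> skew_part f y = - (skew_part f x \<bullet> y)"
  by (simp add: skew_part_def inner_diff_left inner_diff_right adjoint_clauses)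

locale adjoint_closed_commuting_family =
  fixes F :: "('a::euclidean_space \<Rightarrow> 'a) set" and U :: "'a set"
  assumes linear_family: "f \<in> F \<Longrightarrow> linear f"
    and adjoint_closed: "f \<in> F \<Longrightarrow> adjoint f \<in> F"
    and commuting: "f \<in> F \<Longrightarrow> g \<in> F \<Longrightarrow> f \<circ> g = g \<circ> f"
    and invariant: "f \<in> F \<Longrightarrow> f ` U \<subseteq> U"
    and subspace_U: "subspace U"
begin

definition self_adjoint_commutant :: "('a \<Rightarrow> 'a) \<Rightarrow> bool" where
  "self_adjoint_commutant h \<longleftrightarrow> linear h \<and> (\<forall>x y. h x \<bullet> y = x \<bullet> h y) \<and>
     (\<forall>f\<in>F. h \<circ> f = f \<circ> h) \<and> h ` U \<subseteq> U"

definition orbit_in_proper_subspace :: "'a \<Rightarrow> bool" where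
  "orbit_in_proper_subspace u \<longleftrightarrow>
     (\<exists>W. subspace W \<and> W \<subset> U \<and> (\<lambda>f. f u) ` F \<subseteq> W)"

lemma eigenspace_contains_orbit:
  assumes h: "self_adjoint_commutant h" and not_scalar: "\<nexists>c. \<forall>u\<in>U. h u = c *\<^sub>R u"
  obtains u where "u \<in> U" "u \<noteq> 0" "orbit_in_proper_subspace u"
proof -
  have "linear h" and h_U: "h ` U \<subseteq> U"
    using h by (auto simp: self_adjoint_commutant_def)
  interpret h: linear h by fact
  have "U \<noteq> {0}"
    using not_scalar subspace_U subspace_0 by (metis h.zero scaleR_zero_right singletonD)
  then obtain u \<mu> where u: "u \<in> U" "u \<noteq> 0" "h u = \<mu> *\<^sub>R u"
    using self_adjoint_eigenvector_in_invariant_subspace[OF \<open>linear h\<close> _ subspace_U _ h_U] h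
    by (metis self_adjoint_commutant_def)
  define W where "W = {x \<in> U. h x = \<mu> *\<^sub>R x}"
  have "subspace W"
    using subspace_U unfolding W_def subspace_def
    by (auto simp: h.add h.scale algebra_simps)
  moreover have "W \<subset> U"
    using not_scalar by (auto simp: W_def)
  moreover have "f u \<in> W" if "f \<in> F" for f
  proof -
    have "h (f u) = f (h u)"
      using h that by (metis comp_apply self_adjoint_commutant_def)
    then show ?thesis
      using u that invariant linear_family[OF that] by (auto simp: W_def linear_scale)
  qed
  ultimately show ?thesis
    using that u unfolding orbit_in_proper_subspace_def by blast
qed

lemma skew_part_commute:
  assumes "f \<in> F" "g \<in> F"
  shows "skew_part f (g y) = g (skew_part f y)"
proof -
  have "f (g y) = g (f y)" "adjoint f (g y) = g (adjoint f y)"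
    using commuting assms adjoint_closed by (metis comp_apply)+
  then show ?thesis
    using linear_family[OF \<open>g \<in> F\<close>] by (simp add: skew_part_def linear_diff)
qed

lemma skew_part_invariant: "f \<in> F \<Longrightarrow> u \<in> U \<Longrightarrow> skew_part f u \<in> U"
  using invariant adjoint_closed subspace_U by (auto simp: skew_part_def intro!: subspace_diff)

lemma symmetric_part_commutant:
  assumes "f \<in> F"
  shows "self_adjoint_commutant (\<lambda>y. f y + adjoint f y)"
  unfolding self_adjoint_commutant_def
proof (intro conjI ballI allI)
  show "linear (\<lambda>y. f y + adjoint f y)"
    by (intro linear_compose_add linear_family adjoint_closed assms)
  show "(f x + adjoint f x) \<bullet> y = x \<bullet> (f y + adjoint f y)" for x y
    using linear_family[OF assms] by (simp add: inner_add_left inner_add_right adjoint_clauses)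
  show "(\<lambda>y. f y + adjoint f y) \<circ> g = g \<circ> (\<lambda>y. f y + adjoint f y)" if "g \<in> F" for g
    using commuting[OF assms that] commuting[OF adjoint_closed[OF assms] that] linear_family[OF that]
    by (auto simp: fun_eq_iff linear_add dest: fun_cong)
  show "(\<lambda>y. f y + adjoint f y) ` U \<subseteq> U"
    using assms invariant adjoint_closed subspace_U by (auto intro!: subspace_add)
qed

lemma skew_product_commutant:
  assumes "f \<in> F" "g \<in> F"
  shows "self_adjoint_commutant (skew_part f \<circ> skew_part g)"
  unfolding self_adjoint_commutant_def
proof (intro conjI ballI allI)
  show "linear (skew_part f \<circ> skew_part g)"
    using assms linear_family by (intro linear_compose linear_skew_part)
  have "skew_part f (skew_part g y) = skew_part g (skew_part f y)" for y
  proof -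
    have "skew_part f (skew_part g y) = skew_part f (g y) - skew_part f (adjoint g y)"
      using linear_skew_part[OF linear_family[OF assms(1)]] by (simp add: skew_part_def[of g] linear_diff)
    also have "\<dots> = skew_part g (skew_part f y)"
      using assms adjoint_closed by (simp add: skew_part_commute skew_part_def[of g])
    finally show ?thesis .
  qed
  then show "(skew_part f \<circ> skew_part g) x \<bullet> y = x \<bullet> (skew_part f \<circ> skew_part g) y" for x y
    using inner_skew_part linear_family assms by (metis comp_apply minus_minus inner_minus_left)
  show "(skew_part f \<circ> skew_part g) \<circ> h = h \<circ> (skew_part f \<circ> skew_part g)" if "h \<in> F" for h
    using assms that by (simp add: fun_eq_iff skew_part_commute)
  show "(skew_part f \<circ> skew_part g) ` U \<subseteq> U"
    using assms by (auto intro!: skew_part_invariant)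
qed

context
  assumes scalar_commutant: "\<And>h. self_adjoint_commutant h \<Longrightarrow> \<exists>c. \<forall>u\<in>U. h u = c *\<^sub>R u"
begin

lemma skew_part_in_line:
  assumes "f \<in> F" "g \<in> F" "x \<in> U" and nz: "skew_part g x \<noteq> 0"
  shows "skew_part f x \<in> span {skew_part g x}"
proof -
  define y where "y = skew_part g x"
  obtain \<nu> where \<nu>: "\<And>u. u \<in> U \<Longrightarrow> skew_part g (skew_part g u) = \<nu> *\<^sub>R u"
    using scalar_commutant[OF skew_product_commutant[OF \<open>g \<in> F\<close> \<open>g \<in> F\<close>]] by auto
  obtain m where m: "skew_part g (skew_part f x) = m *\<^sub>R x"
    using scalar_commutant[OF skew_product_commutant[OF \<open>g \<in> F\<close> \<open>f \<in> F\<close>]] \<open>x \<in> U\<close> by auto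
  have "\<nu> * (x \<bullet> x) = - (y \<bullet> y)"
    using \<nu>[OF \<open>x \<in> U\<close>] inner_skew_part[OF linear_family[OF \<open>g \<in> F\<close>], of x y]
    by (simp add: y_def)
  then have "\<nu> \<noteq> 0"
    using nz by (metis inner_eq_zero_iff mult_zero_left neg_equal_0_iff_equal y_def)
  define z where "z = skew_part f x - (m / \<nu>) *\<^sub>R y"
  interpret g: linear "skew_part g"
    using linear_skew_part linear_family \<open>g \<in> F\<close> by blast
  have "z \<in> U"
    using assms subspace_U by (auto simp: z_def y_def skew_part_invariant intro!: subspace_diff subspace_scale)
  \<comment> \<open>\<open>z\<close> is killed by \<open>skew_part g\<close>, hence by its square, which is \<open>\<nu> \<noteq> 0\<close> on \<open>U\<close>.\<close>
  have "skew_part g z = 0"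
    using m \<nu>[OF \<open>x \<in> U\<close>] \<open>\<nu> \<noteq> 0\<close> by (simp add: z_def y_def g.diff g.scale)
  then have "\<nu> *\<^sub>R z = 0"
    using \<nu>[OF \<open>z \<in> U\<close>] by (simp add: g.zero)
  then have "skew_part f x = (m / \<nu>) *\<^sub>R y"
    using \<open>\<nu> \<noteq> 0\<close> by (simp add: z_def)
  then show ?thesis
    by (simp add: y_def span_base span_scale)
qed

lemma orbit_in_plane:
  assumes "x \<in> U"
  obtains y where "y \<in> U" "(\<lambda>f. f x) ` F \<subseteq> span {x, y}"
proof -
  have symmetric_part: "f x + adjoint f x \<in> span {x}" if "f \<in> F" for f
    using scalar_commutant[OF symmetric_part_commutant[OF that]] assms
    by (auto simp: span_base span_scale)
  have split: "f x = (1/2) *\<^sub>R (f x + adjoint f x) + (1/2) *\<^sub>R skew_part f x" for f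
    by (simp add: skew_part_def algebra_simps flip: scaleR_2)
  show ?thesis
  proof (cases "\<exists>g\<in>F. skew_part g x \<noteq> 0")
    case True
    then obtain g where "g \<in> F" "skew_part g x \<noteq> 0" by blast
    have "f x \<in> span {x, skew_part g x}" if "f \<in> F" for f
    proof -
      have "f x + adjoint f x \<in> span {x, skew_part g x}"
        using symmetric_part[OF that] span_mono[of "{x}" "{x, skew_part g x}"] by blast
      moreover have "skew_part f x \<in> span {x, skew_part g x}"
        using skew_part_in_line[OF that \<open>g \<in> F\<close> assms \<open>skew_part g x \<noteq> 0\<close>]
          span_mono[of "{skew_part g x}" "{x, skew_part g x}"] by blast
      ultimately show ?thesis
        by (metis split span_add span_scale)
    qed
    then show ?thesis
      using that \<open>g \<in> F\<close> assms skew_part_invariant by blast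
  next
    case False
    then have "f x \<in> span {x, x}" if "f \<in> F" for f
      using split[of f] symmetric_part[OF that] that
      by (metis insert_absorb2 scaleR_zero_right add.right_neutral span_scale)
    then show ?thesis
      using that assms by blast
  qed
qed

end

lemma orthogonal_to_orbit_if_proper:
  assumes "orbit_in_proper_subspace v"
  obtains u where "u \<in> U" "u \<noteq> 0" "\<And>f. f \<in> F \<Longrightarrow> u \<bullet> f v = 0"
proof -
  obtain W where W: "subspace W" "W \<subset> U" "(\<lambda>f. f v) ` F \<subseteq> W"
    using assms by (auto simp: orbit_in_proper_subspace_def)
  then have "span W \<subset> span U"
    using subspace_U by (metis span_eq_iff)
  then obtain u where u: "u \<noteq> 0" "u \<in> span U" "\<And>y. y \<in> span W \<Longrightarrow> orthogonal u y"
    using orthogonal_to_subspace_exists_gen by blast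
  show ?thesis
  proof (rule that)
    show "u \<in> U"
      using u(2) subspace_U by (metis span_eq_iff)
    show "u \<bullet> f v = 0" if "f \<in> F" for f
      using u(3)[of "f v"] W(3) that span_base by (auto simp: orthogonal_def)
  qed (fact u)
qed

lemma orthogonal_to_orbit_exists:
  assumes "3 \<le> dim U"
  obtains u v where "u \<in> U" "v \<in> U" "u \<noteq> 0" "v \<noteq> 0" "\<And>f. f \<in> F \<Longrightarrow> u \<bullet> f v = 0"
proof -
  obtain x where "x \<in> U" "x \<noteq> 0"
  proof -
    have "U \<noteq> {0}"
      using assms by auto
    then show ?thesis
      using that subspace_U subspace_0 by blast
  qed
  have "\<exists>v\<in>U. v \<noteq> 0 \<and> orbit_in_proper_subspace v"
  proof (cases "\<exists>h. self_adjoint_commutant h \<and> (\<nexists>c. \<forall>u\<in>U. h u = c *\<^sub>R u)")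
    case True
    then show ?thesis
      using eigenspace_contains_orbit by metis
  next
    case False
    then obtain y where "y \<in> U" "(\<lambda>f. f x) ` F \<subseteq> span {x, y}"
      using orbit_in_plane[OF _ \<open>x \<in> U\<close>] by blast
    moreover have "dim (span {x, y}) < dim U"
    proof -
      have "dim (span {x, y}) \<le> card {x, y}"
        using dim_le_card[of "span {x, y}" "{x, y}"] by simp
      also have "\<dots> \<le> 2"
        by (simp add: card_insert_le_m1)
      finally show ?thesis
        using assms by simp
    qed
    ultimately have "orbit_in_proper_subspace x"
      using \<open>x \<in> U\<close> subspace_U unfolding orbit_in_proper_subspace_def
      by (metis dim_subset psubsetI span_minimal empty_subsetI insert_subset not_le subspace_span)
    then show ?thesis
      using \<open>x \<in> U\<close> \<open>x \<noteq> 0\<close> by blast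
  qed
  then show ?thesis
    using that orthogonal_to_orbit_if_proper by metis
qed

end

lemma orthogonal_matrix_inner:
  fixes B :: "real^'n^'n"
  assumes "orthogonal_matrix B"
  shows "(B *v x) \<bullet> (B *v y) = x \<bullet> y"
  using assms orthogonal_transformation_matrix[of "(*v) B"]
  by (simp add: orthogonal_transformation_def)

lemma dim_orthogonal_comp:
  fixes V :: "'a::euclidean_space set"
  assumes "subspace V"
  shows "dim (orthogonal_comp V) + dim V = DIM('a)"
  using dim_subspace_orthogonal_to_vectors[OF assms subspace_UNIV]
  by (simp add: orthogonal_comp_def)

lemma orthogonal_comp_invariant:
  fixes B :: "real^'n^'n"
  assumes "orthogonal_matrix B" "\<And>x. x \<in> V \<Longrightarrow> B *v x = x" "u \<in> orthogonal_comp V"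
  shows "B *v u \<in> orthogonal_comp V"
  using assms orthogonal_matrix_inner[OF assms(1), of _ u]
  by (auto simp: orthogonal_comp_def orthogonal_def) (metis assms(2))

lemma translation_pair_fixes_subspace:
  assumes "cocompact_translation_pair \<Gamma> G V" "subspace V" "g \<in> G"
  shows "x \<in> V \<Longrightarrow> fst g *v x = x" and "snd g \<in> V"
proof -
  obtain v where v: "\<And>x. x \<in> V \<Longrightarrow> isom_apply g x = x + v"
    using assms(1,3) unfolding cocompact_translation_pair_def by blast
  have "0 \<in> V"
    using assms(2) subspace_0 by blast
  then have "snd g = v"
    using v[of 0] by (simp add: isom_apply_def)
  then show "x \<in> V \<Longrightarrow> fst g *v x = x"
    using v by (simp add: isom_apply_def)
  show "snd g \<in> V"
    using assms(1,3) \<open>0 \<in> V\<close> by (force simp: cocompact_translation_pair_def isom_apply_def)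
qed

lemma sqrt2_le_dist_orthogonal:
  fixes p w b :: "'a::real_inner"
  assumes "p \<bullet> w = 0" "p \<bullet> b = 0" "w \<bullet> b = 0" "0 \<le> s" "s \<le> norm p" "s \<le> norm w"
  shows "sqrt 2 * s \<le> dist p (w + b)"
proof -
  have "(dist p (w + b))^2 = (norm p)^2 + (norm w)^2 + (norm b)^2"
    using assms(1-3)
    by (simp add: dist_norm power2_norm_eq_inner inner_diff_left inner_diff_right inner_add_left
        inner_add_right inner_commute)
  moreover have "s^2 \<le> (norm p)^2" "s^2 \<le> (norm w)^2"
    using assms(4-6) by (auto intro: power_mono)
  moreover have "(sqrt 2 * s)^2 = 2 * s^2"
    by (simp add: power_mult_distrib)
  ultimately have "(sqrt 2 * s)^2 \<le> (dist p (w + b))^2"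
    using zero_le_power2[of "norm b"] by linarith
  then show ?thesis
    by (rule power2_le_imp_le) simp
qed

lemma dist_le_path_len: "ereal (dist (\<sigma> 0) (\<sigma> 1)) \<le> path_len \<sigma>"
  unfolding path_len_def
  by (rule order.trans[OF _ SUP_upper[of "[0, 1]"]]) auto

lemma path_len_ge_sqrt2_infdist:
  fixes \<sigma> :: "real \<Rightarrow> real^'n"
  assumes "subspace V" "b \<in> V" "\<sigma> 0 \<in> orthogonal_comp V" "\<sigma> 1 - b \<in> orthogonal_comp V"
    and "\<sigma> 0 \<bullet> (\<sigma> 1 - b) = 0"
  shows "ereal (sqrt 2 * Inf ((\<lambda>t. infdist (\<sigma> t) V) ` {0..1})) \<le> path_len \<sigma>"
proof -
  define s where "s = Inf ((\<lambda>t. infdist (\<sigma> t) V) ` {0..1})"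
  have bdd: "bdd_below ((\<lambda>t. infdist (\<sigma> t) V) ` {0..1})"
    by (rule bdd_belowI[of _ 0]) (auto simp: infdist_nonneg)
  have "0 \<le> s"
    unfolding s_def by (rule cINF_greatest) (auto simp: infdist_nonneg)
  have "s \<le> infdist (\<sigma> 0) V"
    unfolding s_def by (rule cINF_lower[OF bdd]) simp
  also have "\<dots> \<le> dist (\<sigma> 0) 0"
    using assms(1) subspace_0 by (blast intro: infdist_le)
  finally have "s \<le> norm (\<sigma> 0)"
    by simp
  have "s \<le> infdist (\<sigma> 1) V"
    unfolding s_def by (rule cINF_lower[OF bdd]) simp
  also have "\<dots> \<le> dist (\<sigma> 1) b"
    using assms(2) by (rule infdist_le)
  finally have "s \<le> norm (\<sigma> 1 - b)"
    by (simp add: dist_norm)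
  have "\<sigma> 0 \<bullet> b = 0" "(\<sigma> 1 - b) \<bullet> b = 0"
    using assms(2-4) by (auto simp: orthogonal_comp_def orthogonal_def inner_commute)
  then have "sqrt 2 * s \<le> dist (\<sigma> 0) (\<sigma> 1 - b + b)"
    using assms(5) \<open>0 \<le> s\<close> \<open>s \<le> norm (\<sigma> 0)\<close> \<open>s \<le> norm (\<sigma> 1 - b)\<close>
    by (intro sqrt2_le_dist_orthogonal)
  then have "sqrt 2 * s \<le> dist (\<sigma> 0) (\<sigma> 1)"
    by simp
  then show ?thesis
    unfolding s_def using dist_le_path_len order.trans ereal_less_eq(3) by metis
qed

lemma translation_pair_linear_parts:
  assumes "discrete_isom_group \<Gamma>" "cocompact_translation_pair \<Gamma> G V" "subspace V"
    and commute: "\<forall>g\<in>G. \<forall>h\<in>G. isom_mult g h = isom_mult h g"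
  shows "adjoint_closed_commuting_family ((\<lambda>g. (*v) (fst g)) ` G) (orthogonal_comp V)"
proof (rule adjoint_closed_commuting_family.intro)
  have subgroup: "isom_subgroup G \<Gamma>"
    using assms(2) by (simp add: cocompact_translation_pair_def)
  have orth: "orthogonal_matrix (fst g)" if "g \<in> G" for g
    using assms(1) subgroup that
    by (auto simp: discrete_isom_group_def isom_subgroup_def Euclid_group_def)
  fix f g
  assume f: "f \<in> (\<lambda>g. (*v) (fst g)) ` G"
  then obtain a where a: "a \<in> G" "f = (*v) (fst a)"
    by blast
  show "linear f"
    by (simp add: a(2) matrix_vector_mul_linear)
  have "isom_inv a \<in> G"
    using subgroup a(1) by (simp add: isom_subgroup_def)
  then show "adjoint f \<in> (\<lambda>g. (*v) (fst g)) ` G"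
    using adjoint_matrix[of "fst a"] by (force simp: a(2) isom_inv_def)
  show "f ` orthogonal_comp V \<subseteq> orthogonal_comp V"
    using orth[OF a(1)] translation_pair_fixes_subspace(1)[OF assms(2,3) a(1)]
    by (auto simp: a(2) intro: orthogonal_comp_invariant)
  assume "g \<in> (\<lambda>g. (*v) (fst g)) ` G"
  then obtain b where b: "b \<in> G" "g = (*v) (fst b)"
    by blast
  have "fst a ** fst b = fst b ** fst a"
    using commute a(1) b(1) by (metis fst_conv isom_mult_def)
  then show "f \<circ> g = g \<circ> f"
    by (simp add: a(2) b(2) fun_eq_iff matrix_vector_mul_assoc)
qed (rule subspace_orthogonal_comp)

theorem mainTheorem20:
  fixes \<Gamma> G :: "'n::finite isom set" and V :: "(real^'n) set"
  assumes "discrete_isom_group \<Gamma>"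
    and "cocompact_translation_pair \<Gamma> G V"
    and "finite_index \<Gamma> G"
    and "\<forall>g\<in>G. \<forall>h\<in>G. isom_mult g h = isom_mult h g"
    and "subspace V"
    and "dim V + 2 < CARD('n)"
  shows "\<exists>u1 u2. u1 \<noteq> 0 \<and> u2 \<noteq> 0 \<and> half_line u1 \<subseteq> orthogonal_comp V \<and>
           half_line u2 \<subseteq> orthogonal_comp V \<and>
           (\<forall>\<sigma> :: real \<Rightarrow> real^'n. path \<sigma> \<longrightarrow> pathstart \<sigma> \<in> half_line u1 \<longrightarrow>
              pathfinish \<sigma> \<in> (\<Union>g\<in>G. isom_apply g ` half_line u2) \<longrightarrow>
              Inf ((\<lambda>t. infdist (\<sigma> t) V) ` {0..1}) > 0 \<longrightarrow>
              path_len \<sigma> \<ge> ereal (sqrt 2 * Inf ((\<lambda>t. infdist (\<sigma> t) V) ` {0..1})))"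
proof -
  \<comment> \<open>Neither the finite index of \<open>G\<close> nor the positivity of \<open>s\<close> is needed.\<close>
  interpret family: adjoint_closed_commuting_family "(\<lambda>g. (*v) (fst g)) ` G" "orthogonal_comp V"
    using translation_pair_linear_parts assms(1,2,4,5) by blast
  have "3 \<le> dim (orthogonal_comp V)"
    using dim_orthogonal_comp[OF assms(5)] assms(6) by simp
  then obtain u1 u2 where u: "u1 \<in> orthogonal_comp V" "u2 \<in> orthogonal_comp V" "u1 \<noteq> 0" "u2 \<noteq> 0"
    and perp: "\<And>g. g \<in> G \<Longrightarrow> u1 \<bullet> (fst g *v u2) = 0"
    by (rule family.orthogonal_to_orbit_exists) blast
  have half_line: "half_line u \<subseteq> orthogonal_comp V" if "u \<in> orthogonal_comp V" for u
    using that subspace_scale[OF subspace_orthogonal_comp] by (auto simp: half_line_def)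
  show ?thesis
  proof (intro exI conjI allI impI)
    fix \<sigma> :: "real \<Rightarrow> real^'n"
    assume "pathstart \<sigma> \<in> half_line u1" "pathfinish \<sigma> \<in> (\<Union>g\<in>G. isom_apply g ` half_line u2)"
    then obtain a g c where "\<sigma> 0 = a *\<^sub>R u1" "g \<in> G" "\<sigma> 1 = fst g *v (c *\<^sub>R u2) + snd g"
      by (auto simp: pathstart_def pathfinish_def half_line_def isom_apply_def)
    moreover have "fst g *v (c *\<^sub>R u2) \<in> orthogonal_comp V"
      using family.invariant[of "(*v) (fst g)"] \<open>g \<in> G\<close> u(2) subspace_scale[OF subspace_orthogonal_comp]
      by (auto simp: matrix_vector_mult_scaleR)
    ultimately show "path_len \<sigma> \<ge> ereal (sqrt 2 * Inf ((\<lambda>t. infdist (\<sigma> t) V) ` {0..1}))"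
      using translation_pair_fixes_subspace(2)[OF assms(2,5)] perp u(1)
        subspace_scale[OF subspace_orthogonal_comp]
      by (intro path_len_ge_sqrt2_infdist[OF assms(5), of "snd g"])
        (auto simp: matrix_vector_mult_scaleR)
  qed (use u half_line in auto)
qed

end
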